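(* Let $s\in(0,1)$, $p\in\{1,2\}$ with $p$ admissible, and $\tau\in(0,1)$. Let $B_1(0)\subset\mathbb{R}^N$ be the unit ball centered at the origin, and set $\mathcal A:=\{a\in B_1(0): B_\tau(a)\subset B_1(0)\}$. Then the map $\mathcal A\to\mathbb{R}$, $a\mapsto\lambda_{s,p}\big(B_1(0)\setminus\overline{B_\tau(a)}\big)$, attains its maximum at $a=0$.
   Context: Let $N\ge 1$ and $s\in(0,1)$. For $u\in H^s(\mathbb{R}^N)$ set $[u]_{H^s(\mathbb{R}^N)}^2=\frac{b_{N,s}}{2}\int_{\mathbb{R}^N}\int_{\mathbb{R}^N}\frac{(u(x)-u(y))^2}{|x-y|^{N+2s}}\,dx\,dy$ with $b_{N,s}=s(1-s)\pi^{-N/2}4^s\frac{\Gamma(\frac N2+s)}{\Gamma(2-s)}$. For an open set $O\subset\mathbb{R}^N$ let $\mathcal H^s_0(O)=\{w\in H^s(\mathbb{R}^N): w=0 \text{ a.e. on } \mathbb{R}^N\setminus O\}$. An exponent $p$ is admissible if $p\in[1,\frac{2N}{N-2s})$ when $2s<N$, and $p\in[1,\infty)$ when $2s\ge N$ (which forces $N=1$). For a bounded open set $O$, $\lambda_{s,p}(O):=\inf\{[u]_{H^s(\mathbb{R}^N)}^2: u\in\mathcal H^s_0(O),\ \|u\|_{L^p(O)}=1\}$. $B_r(a)$ denotes the open ball of radius $r$ centered at $a$. *)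

theory Defs
  imports "HOL-Analysis.Analysis"
begin

text \<open>Ambient space R^N is modelled by a Euclidean space type 'a, N = DIM('a).\<close>

definition b_const :: "nat \<Rightarrow> real \<Rightarrow> real" where
  "b_const N s = s * (1 - s) * pi powr (- real N / 2) * 4 powr s
      * Gamma (real N / 2 + s) / Gamma (2 - s)"

definition gagliardo :: "real \<Rightarrow> ('a::euclidean_space \<Rightarrow> real) \<Rightarrow> ennreal" where
  "gagliardo s u = (\<integral>\<^sup>+ x. (\<integral>\<^sup>+ y. ennreal ((u x - u y)\<^sup>2 / norm (x - y) powr (real DIM('a) + 2 * s)) \<partial>lebesgue) \<partial>lebesgue)"

definition Hs :: "real \<Rightarrow> ('a::euclidean_space \<Rightarrow> real) set" where
  "Hs s = {u. u \<in> borel_measurable lebesgue \<and> integrable lebesgue (\<lambda>x. (u x)\<^sup>2)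
              \<and> gagliardo s u < \<infinity>}"

definition Hs_seminorm_sq :: "real \<Rightarrow> ('a::euclidean_space \<Rightarrow> real) \<Rightarrow> real" where
  "Hs_seminorm_sq s u = b_const DIM('a) s / 2 * enn2real (gagliardo s u)"

definition Hs0 :: "real \<Rightarrow> 'a::euclidean_space set \<Rightarrow> ('a \<Rightarrow> real) set" where
  "Hs0 s U = {w \<in> Hs s. AE x in lebesgue. x \<notin> U \<longrightarrow> w x = 0}"

definition Lp_norm_on :: "real \<Rightarrow> 'a::euclidean_space set \<Rightarrow> ('a \<Rightarrow> real) \<Rightarrow> real" where
  "Lp_norm_on p U u = (LINT x:U|lebesgue. \<bar>u x\<bar> powr p) powr (1 / p)"

definition admissible :: "nat \<Rightarrow> real \<Rightarrow> real \<Rightarrow> bool" where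
  "admissible N s p \<longleftrightarrow>
     (if 2 * s < real N then 1 \<le> p \<and> p < 2 * real N / (real N - 2 * s) else 1 \<le> p)"

definition lambda_sp :: "real \<Rightarrow> real \<Rightarrow> 'a::euclidean_space set \<Rightarrow> real" where
  "lambda_sp s p U = Inf {Hs_seminorm_sq s u | u. u \<in> Hs0 s U \<and> Lp_norm_on p U u = 1}"

end

theory Submission
  imports Defs
begin

text \<open>Move the hole from the centre to \<open>a\<close> one coordinate direction at a time. A single step
  moves it from \<open>c\<close> to \<open>c + \<alpha> k\<close> with \<open>c \<bullet> k = 0\<close>; the reflection in the bisecting hyperplane
  swaps the two centres, and polarizing a nonnegative test function for the hole at \<open>c\<close> towards
  the side of the origin yields a test function for the hole at \<open>c + \<alpha> k\<close>. Polarization is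
  equimeasurable, so the \<open>L\<^sup>p\<close> constraint is kept, and by a two-point rearrangement inequality it
  does not increase the Gagliardo energy, because two points on the same side are closer to each
  other than to their mirror images. Hence \<open>lambda_sp s p\<close> can only decrease along the way.\<close>

section \<open>Affine changes of variables\<close>

lemma sigma_finite_measure_lebesgue: "sigma_finite_measure (lebesgue :: 'a::euclidean_space measure)"
proof
  obtain A :: "'a set set" where A: "countable A" "A \<subseteq> sets lborel" "\<Union>A = space lborel"
    "\<forall>a\<in>A. emeasure lborel a \<noteq> \<infinity>"
    using sigma_finite_measure.sigma_finite_countable[OF sigma_finite_lborel] by blast
  then show "\<exists>A. countable A \<and> A \<subseteq> sets (lebesgue :: 'a measure) \<and> \<Union> A = space lebesgue
      \<and> (\<forall>a\<in>A. emeasure lebesgue a \<noteq> \<infinity>)"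
    by (intro exI[of _ A]) (auto simp: emeasure_completion)
qed

interpretation lebesgue: sigma_finite_measure "lebesgue :: 'a::euclidean_space measure"
  by (rule sigma_finite_measure_lebesgue)

lemma measurable_id_lebesgue_borel[measurable]:
  "(\<lambda>x. x) \<in> (lebesgue :: 'a::euclidean_space measure) \<rightarrow>\<^sub>M borel"
  by (rule measurable_completion) simp

lemma measurable_fst_lebesgue_borel[measurable]:
  "(fst :: 'a::euclidean_space \<times> 'b \<Rightarrow> 'a) \<in> lebesgue \<Otimes>\<^sub>M M \<rightarrow>\<^sub>M borel"
  by (rule measurable_compose[OF measurable_fst measurable_id_lebesgue_borel])

lemma measurable_snd_lebesgue_borel[measurable]:
  "(snd :: 'b \<times> 'a::euclidean_space \<Rightarrow> 'a) \<in> M \<Otimes>\<^sub>M lebesgue \<rightarrow>\<^sub>M borel"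
  by (rule measurable_compose[OF measurable_snd measurable_id_lebesgue_borel])

lemma nn_integral_lebesgue_affine:
  fixes c :: "'a::euclidean_space \<Rightarrow> real"
  assumes c: "\<And>j. j \<in> Basis \<Longrightarrow> c j \<noteq> 0" and f[measurable]: "f \<in> borel_measurable lebesgue"
  shows "(\<integral>\<^sup>+x. f x \<partial>lebesgue)
    = ennreal (\<Prod>j\<in>Basis. \<bar>c j\<bar>) * (\<integral>\<^sup>+x. f (t + (\<Sum>j\<in>Basis. (c j * (x \<bullet> j)) *\<^sub>R j)) \<partial>lebesgue)"
proof -
  let ?T = "\<lambda>x. t + (\<Sum>j\<in>Basis. (c j * (x \<bullet> j)) *\<^sub>R j)"
  have [measurable]: "?T \<in> lebesgue \<rightarrow>\<^sub>M lebesgue"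
    by (rule lebesgue_affine_measurable) (rule c)
  have "(\<integral>\<^sup>+x. f x \<partial>lebesgue)
      = (\<integral>\<^sup>+x. f x \<partial>density (distr lebesgue lebesgue ?T) (\<lambda>_. \<Prod>j\<in>Basis. \<bar>c j\<bar>))"
    using c by (subst lebesgue_affine_euclidean[of c t]) auto
  also have "\<dots> = (\<integral>\<^sup>+x. ennreal (\<Prod>j\<in>Basis. \<bar>c j\<bar>) * f x \<partial>distr lebesgue lebesgue ?T)"
    by (subst nn_integral_density) auto
  also have "\<dots> = ennreal (\<Prod>j\<in>Basis. \<bar>c j\<bar>) * (\<integral>\<^sup>+x. f (?T x) \<partial>lebesgue)"
    by (simp add: nn_integral_cmult nn_integral_distr)
  finally show ?thesis .
qed

lemma rescale_eq_affine:
  fixes q :: "'a::euclidean_space"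
  shows "(\<lambda>x. (1 / r) *\<^sub>R (x - q)) = (\<lambda>x. - ((1 / r) *\<^sub>R q) + (\<Sum>j\<in>Basis. (1 / r * (x \<bullet> j)) *\<^sub>R j))"
  unfolding scaleR_scaleR[symmetric] scaleR_sum_right[symmetric] euclidean_representation
  by (simp add: algebra_simps)

lemma measurable_rescale[measurable]:
  fixes q :: "'a::euclidean_space"
  assumes "0 < r"
  shows "(\<lambda>x. (1 / r) *\<^sub>R (x - q)) \<in> lebesgue \<rightarrow>\<^sub>M lebesgue"
  unfolding rescale_eq_affine using assms by (intro lebesgue_affine_measurable) simp

lemma nn_integral_lebesgue_rescale:
  fixes q :: "'a::euclidean_space"
  assumes r: "0 < r" and [measurable]: "f \<in> borel_measurable lebesgue"
  shows "(\<integral>\<^sup>+x. f ((1 / r) *\<^sub>R (x - q)) \<partial>lebesgue) = ennreal (r ^ DIM('a)) * (\<integral>\<^sup>+x. f x \<partial>lebesgue)"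
proof -
  have "(\<integral>\<^sup>+x. f x \<partial>lebesgue)
      = ennreal ((1 / r) ^ DIM('a)) * (\<integral>\<^sup>+x. f ((1 / r) *\<^sub>R (x - q)) \<partial>lebesgue)"
  proof -
    have "(\<Sum>j\<in>Basis. (x \<bullet> j / r) *\<^sub>R j) - (1 / r) *\<^sub>R q = (1 / r) *\<^sub>R (x - q)" for x
      using fun_cong[OF rescale_eq_affine[of r q], of x] by simp
    then show ?thesis
      using nn_integral_lebesgue_affine[of "\<lambda>_. 1 / r" f "- ((1 / r) *\<^sub>R q)"] r
      by (simp add: prod_constant)
  qed
  moreover have "ennreal (r ^ DIM('a)) * ennreal ((1 / r) ^ DIM('a)) = 1"
    using r by (simp flip: ennreal_mult'' power_mult_distrib)
  ultimately show ?thesis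
    by (simp add: mult.assoc[symmetric])
qed

section \<open>The Gagliardo energy\<close>

definition gagliardo_kernel :: "real \<Rightarrow> ('a::euclidean_space \<Rightarrow> real) \<Rightarrow> 'a \<Rightarrow> 'a \<Rightarrow> ennreal" where
  "gagliardo_kernel s u x y = ennreal ((u x - u y)\<^sup>2 / norm (x - y) powr (real DIM('a) + 2 * s))"

lemma gagliardo_eq_kernel:
  "gagliardo s u = (\<integral>\<^sup>+ x. (\<integral>\<^sup>+ y. gagliardo_kernel s u x y \<partial>lebesgue) \<partial>lebesgue)"
  by (simp add: gagliardo_def gagliardo_kernel_def)

lemma measurable_gagliardo_kernel[measurable]:
  assumes [measurable]: "u \<in> borel_measurable lebesgue"
  shows "gagliardo_kernel s u x \<in> borel_measurable lebesgue"
    and "(\<lambda>(x, y). gagliardo_kernel s u x y) \<in> borel_measurable (lebesgue \<Otimes>\<^sub>M lebesgue)"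
    and "(\<lambda>x. \<integral>\<^sup>+ y. gagliardo_kernel s u x y \<partial>lebesgue) \<in> borel_measurable lebesgue"
proof -
  show "gagliardo_kernel s u x \<in> borel_measurable lebesgue"
    and *: "(\<lambda>(x, y). gagliardo_kernel s u x y) \<in> borel_measurable (lebesgue \<Otimes>\<^sub>M lebesgue)"
    unfolding gagliardo_kernel_def by measurable
  show "(\<lambda>x. \<integral>\<^sup>+ y. gagliardo_kernel s u x y \<partial>lebesgue) \<in> borel_measurable lebesgue"
    using * by (rule lebesgue.borel_measurable_nn_integral)
qed

lemma gagliardo_mono_AE:
  assumes "AE x in lebesgue. AE y in lebesgue. (v x - v y)\<^sup>2 \<le> (u x - u y)\<^sup>2"
  shows "gagliardo s v \<le> gagliardo s u"
  unfolding gagliardo_def using assms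
  by (intro nn_integral_mono_AE)
    (auto elim!: eventually_mono intro!: nn_integral_mono_AE ennreal_leI divide_right_mono)

lemma gagliardo_rescale:
  fixes q :: "'a::euclidean_space"
  assumes r: "0 < r" and [measurable]: "v \<in> borel_measurable lebesgue"
  shows "gagliardo s (\<lambda>x. K * v ((1 / r) *\<^sub>R (x - q)))
    = ennreal (K\<^sup>2 * r powr (real DIM('a) - 2 * s)) * gagliardo s v"
proof -
  let ?T = "\<lambda>x. (1 / r) *\<^sub>R (x - q)" and ?N = "real DIM('a)"
  define M where "M = K\<^sup>2 / r powr (?N + 2 * s)"
  have "0 \<le> M" by (simp add: M_def)
  have [measurable]: "?T \<in> lebesgue \<rightarrow>\<^sub>M lebesgue"
    using r by (rule measurable_rescale)
  have kernel: "gagliardo_kernel s (\<lambda>x. K * v (?T x)) x y = ennreal M * gagliardo_kernel s v (?T x) (?T y)"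
    for x y
  proof -
    have "norm (x - y) = r * norm (?T x - ?T y)"
      using r by (simp add: algebra_simps flip: scaleR_diff_right)
    then have "norm (x - y) powr (?N + 2 * s) = r powr (?N + 2 * s) * norm (?T x - ?T y) powr (?N + 2 * s)"
      using r by (simp add: powr_mult)
    then show ?thesis
      unfolding gagliardo_kernel_def M_def
      by (simp add: ennreal_mult[symmetric] power_mult_distrib right_diff_distrib[symmetric])
  qed
  have "gagliardo s (\<lambda>x. K * v (?T x))
      = (\<integral>\<^sup>+x. ennreal M * (ennreal (r ^ DIM('a)) * (\<integral>\<^sup>+y. gagliardo_kernel s v (?T x) y \<partial>lebesgue)) \<partial>lebesgue)"
    unfolding gagliardo_eq_kernel kernel
    by (simp add: nn_integral_cmult nn_integral_lebesgue_rescale[OF r])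
  also have "\<dots> = ennreal M * (ennreal (r ^ DIM('a)) * (ennreal (r ^ DIM('a)) * gagliardo s v))"
    unfolding gagliardo_eq_kernel
    using nn_integral_lebesgue_rescale[OF r measurable_gagliardo_kernel(3), of v s q]
    by (simp add: nn_integral_cmult)
  also have "\<dots> = ennreal (M * r ^ DIM('a) * r ^ DIM('a)) * gagliardo s v"
    using r \<open>0 \<le> M\<close> by (simp add: ennreal_mult mult.assoc)
  also have "M * r ^ DIM('a) * r ^ DIM('a) = K\<^sup>2 * r powr (?N - 2 * s)"
    using r by (simp add: M_def powr_realpow[symmetric] powr_diff powr_add)
  finally show ?thesis .
qed

section \<open>Polarization\<close>

lemma two_point_rearrangement:
  fixes a b c d w1 w2 :: real
  assumes "w2 \<le> w1" "0 \<le> w2"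
  shows "(max a b - max c d)\<^sup>2 * w1 + (max a b - min c d)\<^sup>2 * w2
       + (min a b - max c d)\<^sup>2 * w2 + (min a b - min c d)\<^sup>2 * w1
     \<le> (a - c)\<^sup>2 * w1 + (a - d)\<^sup>2 * w2 + (b - c)\<^sup>2 * w2 + (b - d)\<^sup>2 * w1"
proof (cases "(a \<le> b) = (c \<le> d)")
  case True
  then show ?thesis by (cases "a \<le> b") (simp_all add: max_def min_def)
next
  case False
  then have "0 \<le> - 2 * ((a - b) * (c - d))"
    by (auto simp: mult_le_0_iff)
  then have "0 \<le> (w1 - w2) * (- 2 * ((a - b) * (c - d)))"
    using assms(1) by (simp only: mult_nonneg_nonneg diff_ge_0_iff_ge)
  also have "- 2 * ((a - b) * (c - d)) = (a - c)\<^sup>2 + (b - d)\<^sup>2 - (b - c)\<^sup>2 - (a - d)\<^sup>2"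
    by (simp add: power2_eq_square algebra_simps)
  finally show ?thesis
    using False by (cases "a \<le> b") (simp_all add: max_def min_def algebra_simps)
qed

text \<open>For a basis vector k and \<open>\<alpha> \<noteq> 0\<close>, \<open>reflect k \<alpha>\<close> is the reflection in the
  hyperplane \<open>x \<bullet> k = \<alpha> / 2\<close>, and \<open>side k \<alpha>\<close> is positive exactly on the open half-space
  containing the origin.\<close>

definition reflect :: "'a::euclidean_space \<Rightarrow> real \<Rightarrow> 'a \<Rightarrow> 'a" where
  "reflect k \<alpha> x = x + (\<alpha> - 2 * (x \<bullet> k)) *\<^sub>R k"

definition side :: "'a::euclidean_space \<Rightarrow> real \<Rightarrow> 'a \<Rightarrow> real" where
  "side k \<alpha> x = \<alpha> * (\<alpha> - 2 * (x \<bullet> k))"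

lemma side_measurable[measurable]: "side k \<alpha> \<in> borel_measurable lebesgue"
  unfolding side_def by measurable

definition polarize :: "'a::euclidean_space \<Rightarrow> real \<Rightarrow> ('a \<Rightarrow> real) \<Rightarrow> 'a \<Rightarrow> real" where
  "polarize k \<alpha> v x =
    (if 0 < side k \<alpha> x then max (v x) (v (reflect k \<alpha> x))
     else if side k \<alpha> x < 0 then min (v x) (v (reflect k \<alpha> x)) else v x)"

definition folded_gagliardo_kernel ::
    "real \<Rightarrow> 'a::euclidean_space \<Rightarrow> real \<Rightarrow> ('a \<Rightarrow> real) \<Rightarrow> 'a \<Rightarrow> 'a \<Rightarrow> ennreal" where
  "folded_gagliardo_kernel s k \<alpha> u x y =
    gagliardo_kernel s u x y + gagliardo_kernel s u x (reflect k \<alpha> y)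
    + gagliardo_kernel s u (reflect k \<alpha> x) y + gagliardo_kernel s u (reflect k \<alpha> x) (reflect k \<alpha> y)"

context
  fixes k :: "'a::euclidean_space" and \<alpha> :: real
  assumes k: "k \<in> Basis"
begin

lemma reflect_eq_affine:
  "reflect k \<alpha> = (\<lambda>x. \<alpha> *\<^sub>R k + (\<Sum>j\<in>Basis. ((if j = k then -1 else 1) * (x \<bullet> j)) *\<^sub>R j))"
proof
  fix x :: 'a
  have "(\<Sum>j\<in>Basis. ((if j = k then -1 else 1) * (x \<bullet> j)) *\<^sub>R j)
      = (\<Sum>j\<in>Basis. (x \<bullet> j) *\<^sub>R j - (if j = k then 2 * (x \<bullet> j) else 0) *\<^sub>R j)"
    by (intro sum.cong refl) (auto simp flip: scaleR_diff_left)
  also have "\<dots> = x - (2 * (x \<bullet> k)) *\<^sub>R k"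
    using k by (simp add: sum_subtractf euclidean_representation if_distrib[of "\<lambda>c. c *\<^sub>R _"]
        sum.delta cong: if_cong)
  finally show "reflect k \<alpha> x = \<alpha> *\<^sub>R k + (\<Sum>j\<in>Basis. ((if j = k then -1 else 1) * (x \<bullet> j)) *\<^sub>R j)"
    by (simp add: reflect_def algebra_simps)
qed

lemma measurable_reflect[measurable]: "reflect k \<alpha> \<in> lebesgue \<rightarrow>\<^sub>M lebesgue"
  unfolding reflect_eq_affine by (rule lebesgue_affine_measurable) simp

lemma nn_integral_reflect:
  assumes "f \<in> borel_measurable lebesgue"
  shows "(\<integral>\<^sup>+x. f x \<partial>lebesgue) = (\<integral>\<^sup>+x. f (reflect k \<alpha> x) \<partial>lebesgue)"
  using nn_integral_lebesgue_affine[OF _ assms, of "\<lambda>j. if j = k then -1 else 1" "\<alpha> *\<^sub>R k"]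
  by (simp add: reflect_eq_affine if_distrib prod.neutral)

lemma reflect_reflect[simp]: "reflect k \<alpha> (reflect k \<alpha> x) = x"
  using k by (simp add: reflect_def inner_simps algebra_simps)

lemma inner_reflect: "reflect k \<alpha> x \<bullet> k = \<alpha> - x \<bullet> k"
  using k by (simp add: reflect_def inner_simps)

lemma side_reflect: "side k \<alpha> (reflect k \<alpha> x) = - side k \<alpha> x"
  by (simp add: side_def inner_reflect algebra_simps)

lemma reflect_orthogonal: "y \<bullet> k = 0 \<Longrightarrow> reflect k \<alpha> y = y + \<alpha> *\<^sub>R k"
  by (simp add: reflect_def)

lemma norm_diff_reflect_sq:
  "norm (x - reflect k \<alpha> y) ^ 2 = norm (x - y) ^ 2 + (\<alpha> - 2 * (y \<bullet> k)) * (\<alpha> - 2 * (x \<bullet> k))"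
proof -
  have eq: "x - reflect k \<alpha> y = (x - y) - (\<alpha> - 2 * (y \<bullet> k)) *\<^sub>R k"
    by (simp add: reflect_def algebra_simps)
  have "norm (x - reflect k \<alpha> y) ^ 2
      = ((x - y) - (\<alpha> - 2 * (y \<bullet> k)) *\<^sub>R k) \<bullet> ((x - y) - (\<alpha> - 2 * (y \<bullet> k)) *\<^sub>R k)"
    unfolding eq[symmetric] by (simp add: power2_norm_eq_inner)
  also have "\<dots> = (x - y) \<bullet> (x - y) + (\<alpha> - 2 * (y \<bullet> k)) * (\<alpha> - 2 * (x \<bullet> k))"
    using k by (simp add: inner_diff_left inner_diff_right inner_commute[of k x] inner_commute[of k y]
        algebra_simps power2_eq_square)
  finally show ?thesis by (simp add: power2_norm_eq_inner)
qed

lemma norm_diff_reflect_orthogonal_sq: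
  "y \<bullet> k = 0 \<Longrightarrow> norm (x - reflect k \<alpha> y) ^ 2 = norm (x - y) ^ 2 + side k \<alpha> x"
  by (simp add: norm_diff_reflect_sq side_def)

lemma norm_reflect_diff_reflect: "norm (reflect k \<alpha> x - reflect k \<alpha> y) = norm (x - y)"
proof -
  define z where "z = x - y"
  have "reflect k \<alpha> x - reflect k \<alpha> y = z - (2 * (z \<bullet> k)) *\<^sub>R k"
    by (simp add: reflect_def z_def inner_simps algebra_simps)
  moreover have "(z - (2 * (z \<bullet> k)) *\<^sub>R k) \<bullet> (z - (2 * (z \<bullet> k)) *\<^sub>R k) = z \<bullet> z"
    using k by (simp add: inner_diff_left inner_diff_right inner_commute[of k z] algebra_simps)
  ultimately show ?thesis by (simp add: norm_eq_sqrt_inner z_def)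
qed

lemma norm_reflect_diff: "norm (reflect k \<alpha> x - y) = norm (x - reflect k \<alpha> y)"
  using norm_reflect_diff_reflect[of x "reflect k \<alpha> y"] by simp

lemma norm_diff_le_norm_diff_reflect:
  assumes "0 < side k \<alpha> x" "0 < side k \<alpha> y"
  shows "norm (x - y) \<le> norm (x - reflect k \<alpha> y)"
proof -
  have "0 < side k \<alpha> x * side k \<alpha> y" using assms by simp
  then have "0 < \<alpha>\<^sup>2 * ((\<alpha> - 2 * (y \<bullet> k)) * (\<alpha> - 2 * (x \<bullet> k)))"
    by (simp add: side_def power2_eq_square algebra_simps)
  then have "0 < (\<alpha> - 2 * (y \<bullet> k)) * (\<alpha> - 2 * (x \<bullet> k))"
    by (simp add: zero_less_mult_iff)
  then have "norm (x - y) ^ 2 \<le> norm (x - reflect k \<alpha> y) ^ 2"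
    using norm_diff_reflect_sq[of x y] by simp
  then show ?thesis by (simp add: power2_le_iff_abs_le)
qed

lemma null_sets_side_eq_0:
  assumes "\<alpha> \<noteq> 0"
  shows "{x. side k \<alpha> x = 0} \<in> null_sets lebesgue"
proof -
  have "{x. side k \<alpha> x = 0} = {x. k \<bullet> x = \<alpha> / 2}"
    using assms by (auto simp: side_def inner_commute field_simps)
  moreover have "negligible {x. k \<bullet> x = \<alpha> / 2}"
    using k by (intro negligible_hyperplane) auto
  ultimately show ?thesis by (simp add: negligible_iff_null_sets)
qed

lemma nn_integral_fold:
  assumes \<alpha>: "\<alpha> \<noteq> 0" and g[measurable]: "g \<in> borel_measurable lebesgue"
  shows "(\<integral>\<^sup>+x. g x \<partial>lebesgue)
    = (\<integral>\<^sup>+x. (g x + g (reflect k \<alpha> x)) * indicator {x. 0 < side k \<alpha> x} x \<partial>lebesgue)"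
proof -
  let ?P = "{x. 0 < side k \<alpha> x}" and ?N = "{x. side k \<alpha> x < 0}"
  have "AE x in lebesgue. g x = g x * indicator ?P x + g x * indicator ?N x"
    using AE_not_in[OF null_sets_side_eq_0[OF \<alpha>]] by eventually_elim (auto simp: indicator_def)
  then have "(\<integral>\<^sup>+x. g x \<partial>lebesgue)
      = (\<integral>\<^sup>+x. g x * indicator ?P x \<partial>lebesgue) + (\<integral>\<^sup>+x. g x * indicator ?N x \<partial>lebesgue)"
    by (simp add: nn_integral_cong_AE nn_integral_add)
  also have "(\<integral>\<^sup>+x. g x * indicator ?N x \<partial>lebesgue)
      = (\<integral>\<^sup>+x. g (reflect k \<alpha> x) * indicator ?P x \<partial>lebesgue)"
    by (subst nn_integral_reflect) (auto simp: indicator_def side_reflect)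
  also have "(\<integral>\<^sup>+x. g x * indicator ?P x \<partial>lebesgue) + \<dots>
      = (\<integral>\<^sup>+x. (g x + g (reflect k \<alpha> x)) * indicator ?P x \<partial>lebesgue)"
    by (simp add: nn_integral_add distrib_right)
  finally show ?thesis .
qed

lemma measurable_comp_reflect[measurable]:
  assumes "v \<in> borel_measurable lebesgue"
  shows "(\<lambda>x. v (reflect k \<alpha> x)) \<in> borel_measurable lebesgue"
  using measurable_compose[OF measurable_reflect assms] .

lemma polarize_measurable[measurable]:
  assumes [measurable]: "v \<in> borel_measurable lebesgue"
  shows "polarize k \<alpha> v \<in> borel_measurable lebesgue"
  unfolding polarize_def by measurable

lemma polarize_pos_side:
  assumes "0 < side k \<alpha> x"
  shows "polarize k \<alpha> v x = max (v x) (v (reflect k \<alpha> x))"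
    and "polarize k \<alpha> v (reflect k \<alpha> x) = min (v x) (v (reflect k \<alpha> x))"
  using assms k by (simp_all add: polarize_def side_reflect min.commute)

lemma nn_integral_polarize:
  assumes \<alpha>: "\<alpha> \<noteq> 0" and [measurable]: "v \<in> borel_measurable lebesgue" "h \<in> borel_measurable borel"
  shows "(\<integral>\<^sup>+x. h (polarize k \<alpha> v x) \<partial>lebesgue) = (\<integral>\<^sup>+x. h (v x) \<partial>lebesgue)"
proof -
  have "(\<integral>\<^sup>+x. h (polarize k \<alpha> v x) \<partial>lebesgue)
      = (\<integral>\<^sup>+x. (h (v x) + h (v (reflect k \<alpha> x))) * indicator {x. 0 < side k \<alpha> x} x \<partial>lebesgue)"
    by (subst nn_integral_fold[OF \<alpha>])
      (auto intro!: nn_integral_cong simp: indicator_def polarize_pos_side max_def min_def add.commute)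
  also have "\<dots> = (\<integral>\<^sup>+x. h (v x) \<partial>lebesgue)"
    by (rule nn_integral_fold[OF \<alpha>, symmetric]) measurable
  finally show ?thesis .
qed

lemma gagliardo_fold:
  assumes \<alpha>: "\<alpha> \<noteq> 0" and [measurable]: "u \<in> borel_measurable lebesgue"
  shows "gagliardo s u = (\<integral>\<^sup>+x. (\<integral>\<^sup>+y. folded_gagliardo_kernel s k \<alpha> u x y
      * indicator {x. 0 < side k \<alpha> x} y \<partial>lebesgue) * indicator {x. 0 < side k \<alpha> x} x \<partial>lebesgue)"
proof -
  let ?P = "{x. 0 < side k \<alpha> x}" and ?\<sigma> = "reflect k \<alpha>"
  let ?I = "\<lambda>x. \<integral>\<^sup>+ y. gagliardo_kernel s u x y \<partial>lebesgue"
  have inner: "?I x + ?I (?\<sigma> x) = (\<integral>\<^sup>+y. folded_gagliardo_kernel s k \<alpha> u x y * indicator ?P y \<partial>lebesgue)"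
    for x
    unfolding nn_integral_fold[OF \<alpha> measurable_gagliardo_kernel(1)[OF assms(2)]]
    by (subst nn_integral_add[symmetric])
      (auto intro!: nn_integral_cong simp: folded_gagliardo_kernel_def distrib_right add.assoc)
  show ?thesis
    unfolding gagliardo_eq_kernel
    by (subst nn_integral_fold[OF \<alpha>]) (auto simp: inner)
qed

lemma folded_gagliardo_kernel_polarize_le:
  assumes s: "0 < s" and x: "0 < side k \<alpha> x" and y: "0 < side k \<alpha> y"
  shows "folded_gagliardo_kernel s k \<alpha> (polarize k \<alpha> v) x y \<le> folded_gagliardo_kernel s k \<alpha> v x y"
proof -
  let ?q = "real DIM('a) + 2 * s" and ?\<sigma> = "reflect k \<alpha>"
  define w1 where "w1 = inverse (norm (x - y) powr ?q)"
  define w2 where "w2 = inverse (norm (x - ?\<sigma> y) powr ?q)"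
  have "x \<noteq> ?\<sigma> y"
    using x y side_reflect[of y] by auto
  have w: "w2 \<le> w1" "0 \<le> w2" if "x \<noteq> y"
    using that \<open>x \<noteq> ?\<sigma> y\<close> norm_diff_le_norm_diff_reflect[OF x y] s
    by (auto simp: w1_def w2_def intro!: le_imp_inverse_le powr_mono2)
  have "0 \<le> w1" "0 \<le> w2" by (simp_all add: w1_def w2_def)
  have kernel: "folded_gagliardo_kernel s k \<alpha> u x y = ennreal
      ((u x - u y)\<^sup>2 * w1 + (u x - u (?\<sigma> y))\<^sup>2 * w2 + (u (?\<sigma> x) - u y)\<^sup>2 * w2
       + (u (?\<sigma> x) - u (?\<sigma> y))\<^sup>2 * w1)" for u
    unfolding folded_gagliardo_kernel_def gagliardo_kernel_def norm_reflect_diff_reflect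
      norm_reflect_diff divide_inverse
    using \<open>0 \<le> w1\<close> \<open>0 \<le> w2\<close> by (simp add: w1_def w2_def ennreal_plus del: ennreal_plus_if)
  show ?thesis
  proof (cases "x = y")
    case True
    show ?thesis
      unfolding kernel polarize_pos_side[OF x] polarize_pos_side[OF y] using True
      by (cases "v y \<le> v (?\<sigma> y)") (simp_all add: max_def min_def power2_commute)
  next
    case False
    show ?thesis
      unfolding kernel polarize_pos_side[OF x] polarize_pos_side[OF y]
      by (intro ennreal_leI two_point_rearrangement w False)
  qed
qed

lemma gagliardo_polarize_le:
  assumes s: "0 < s" and \<alpha>: "\<alpha> \<noteq> 0" and [measurable]: "v \<in> borel_measurable lebesgue"
  shows "gagliardo s (polarize k \<alpha> v) \<le> gagliardo s v"
  unfolding gagliardo_fold[OF \<alpha> assms(3)] gagliardo_fold[OF \<alpha> polarize_measurable[OF assms(3)]]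
  by (intro nn_integral_mono)
    (auto simp: indicator_def intro!: nn_integral_mono folded_gagliardo_kernel_polarize_le[OF s])

text \<open>The reflection swaps the centres \<open>c\<close> and \<open>c + \<alpha> k\<close>, and a point on the side of the origin
  is at least as close to 0 and to \<open>c\<close> as its mirror image is.\<close>

lemma outside_annulus_reflect:
  assumes ck: "c \<bullet> k = 0" and x: "x \<notin> ball 0 1 - cball (c + \<alpha> *\<^sub>R k) \<tau>"
  shows "x \<notin> ball 0 1 - cball c \<tau> \<or> reflect k \<alpha> x \<notin> ball 0 1 - cball c \<tau>"
    and "0 \<le> side k \<alpha> x \<Longrightarrow> x \<notin> ball 0 1 - cball c \<tau>"
    and "0 < side k \<alpha> x \<Longrightarrow> reflect k \<alpha> x \<notin> ball 0 1 - cball c \<tau>"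
proof -
  let ?\<sigma> = "reflect k \<alpha>" and ?d = "c + \<alpha> *\<^sub>R k"
  have notin_iff: "y \<notin> ball 0 1 - cball c \<tau> \<longleftrightarrow> 1 \<le> norm y \<or> norm (y - c) \<le> \<tau>" for y
    by (auto simp: dist_norm norm_minus_commute)
  have x': "1 \<le> norm x \<or> norm (x - ?d) \<le> \<tau>"
    using x by (auto simp: dist_norm norm_minus_commute)
  have norm_reflect_diff_c: "norm (?\<sigma> x - c) = norm (x - ?d)"
    using norm_reflect_diff[of x c] by (simp add: reflect_orthogonal[OF ck])
  show "x \<notin> ball 0 1 - cball c \<tau> \<or> ?\<sigma> x \<notin> ball 0 1 - cball c \<tau>"
    unfolding notin_iff norm_reflect_diff_c using x' by blast
  show "x \<notin> ball 0 1 - cball c \<tau>" if "0 \<le> side k \<alpha> x"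
  proof -
    have "norm (x - c) ^ 2 \<le> norm (x - ?d) ^ 2"
      using norm_diff_reflect_orthogonal_sq[OF ck, of x] that by (simp add: reflect_orthogonal[OF ck])
    then have "norm (x - c) \<le> norm (x - ?d)"
      by (rule power2_le_imp_le) simp
    then show ?thesis unfolding notin_iff using x' by linarith
  qed
  show "?\<sigma> x \<notin> ball 0 1 - cball c \<tau>" if "0 < side k \<alpha> x"
  proof -
    have "norm x ^ 2 \<le> norm (?\<sigma> x) ^ 2"
      using norm_diff_reflect_orthogonal_sq[of 0 x] norm_reflect_diff[of x 0] that by simp
    then have "norm x \<le> norm (?\<sigma> x)"
      by (rule power2_le_imp_le) simp
    then show ?thesis unfolding notin_iff norm_reflect_diff_c using x' by linarith
  qed
qed

lemma polarize_eq_0_outside_annulus: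
  assumes ck: "c \<bullet> k = 0" and nonneg: "\<And>x. 0 \<le> v x"
    and v0: "\<And>x. x \<notin> ball 0 1 - cball c \<tau> \<Longrightarrow> v x = 0"
    and x: "x \<notin> ball 0 1 - cball (c + \<alpha> *\<^sub>R k) \<tau>"
  shows "polarize k \<alpha> v x = 0"
proof -
  note out = outside_annulus_reflect[OF ck x]
  consider "0 < side k \<alpha> x" | "side k \<alpha> x < 0" | "side k \<alpha> x = 0"
    by linarith
  then show ?thesis
  proof cases
    case 1
    then show ?thesis using out(2,3) v0 by (simp add: polarize_def)
  next
    case 2
    have "v x = 0 \<or> v (reflect k \<alpha> x) = 0"
      using out(1) v0 by blast
    then show ?thesis
      using 2 nonneg[of x] nonneg[of "reflect k \<alpha> x"] by (auto simp: polarize_def min_def)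
  next
    case 3
    then show ?thesis using out(2) v0 by (simp add: polarize_def)
  qed
qed

end

section \<open>Test functions\<close>

definition competitor :: "real \<Rightarrow> real \<Rightarrow> 'a::euclidean_space set \<Rightarrow> ('a \<Rightarrow> real) \<Rightarrow> bool" where
  "competitor s p U v \<longleftrightarrow> v \<in> borel_measurable lebesgue \<and> (\<forall>x. 0 \<le> v x) \<and> (\<forall>x. x \<notin> U \<longrightarrow> v x = 0)
     \<and> (\<integral>\<^sup>+x. ennreal ((v x)\<^sup>2) \<partial>lebesgue) < \<infinity> \<and> gagliardo s v < \<infinity>
     \<and> (\<integral>\<^sup>+x. ennreal (v x powr p) \<partial>lebesgue) = 1"

lemma competitor_mono: "competitor s p U v \<Longrightarrow> U \<subseteq> V \<Longrightarrow> competitor s p V v"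
  by (auto simp: competitor_def)

lemma competitor_in_Hs0:
  assumes v: "competitor s p U v" and p: "0 < p"
  shows "v \<in> Hs0 s U" "Lp_norm_on p U v = 1"
proof -
  have [measurable]: "v \<in> borel_measurable lebesgue" and nonneg: "\<And>x. 0 \<le> v x"
    and v0: "\<And>x. x \<notin> U \<Longrightarrow> v x = 0"
    and "(\<integral>\<^sup>+x. ennreal ((v x)\<^sup>2) \<partial>lebesgue) < \<infinity>" "gagliardo s v < \<infinity>"
    and norm: "(\<integral>\<^sup>+x. ennreal (v x powr p) \<partial>lebesgue) = 1"
    using v by (auto simp: competitor_def)
  then show "v \<in> Hs0 s U"
    by (simp add: Hs0_def Hs_def integrable_iff_bounded)
  have "(LINT x:U|lebesgue. \<bar>v x\<bar> powr p) = (LINT x|lebesgue. v x powr p)"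
    unfolding set_lebesgue_integral_def
    by (intro Bochner_Integration.integral_cong) (auto simp: indicator_def nonneg v0)
  also have "\<dots> = 1"
    by (subst integral_eq_nn_integral) (auto simp: norm)
  finally show "Lp_norm_on p U v = 1"
    by (simp add: Lp_norm_on_def)
qed

lemma set_integral_powr_eq_1:
  assumes "Lp_norm_on p U u = 1" "0 < p"
  shows "(LINT x:U|lebesgue. \<bar>u x\<bar> powr p) = 1"
proof -
  have "0 \<le> (LINT x:U|lebesgue. \<bar>u x\<bar> powr p)"
    unfolding set_lebesgue_integral_def by (simp add: Bochner_Integration.integral_nonneg)
  moreover have "((LINT x:U|lebesgue. \<bar>u x\<bar> powr p) powr (1 / p)) powr p = 1"
    using assms by (simp add: Lp_norm_on_def)
  ultimately show ?thesis
    using assms(2) by (simp add: powr_powr)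
qed

text \<open>Replacing u by \<open>\<bar>u\<bar>\<close> cut off outside U keeps the constraint and, as u vanishes a.e.
  outside U, does not increase the Gagliardo energy.\<close>

lemma ex_competitor_le:
  assumes u: "u \<in> Hs0 s U" and norm: "Lp_norm_on p U u = 1" and p: "0 < p"
    and U[measurable]: "U \<in> sets lebesgue"
  shows "\<exists>v. competitor s p U v \<and> gagliardo s v \<le> gagliardo s u"
proof -
  have [measurable]: "u \<in> borel_measurable lebesgue" and L2: "integrable lebesgue (\<lambda>x. (u x)\<^sup>2)"
    and "gagliardo s u < \<infinity>" and ae: "AE x in lebesgue. x \<notin> U \<longrightarrow> u x = 0"
    using u by (auto simp: Hs0_def Hs_def)
  define v where "v x = indicator U x * \<bar>u x\<bar>" for x
  have [measurable]: "v \<in> borel_measurable lebesgue"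
    unfolding v_def by measurable
  have "(\<integral>\<^sup>+x. ennreal ((v x)\<^sup>2) \<partial>lebesgue) \<le> (\<integral>\<^sup>+x. ennreal ((u x)\<^sup>2) \<partial>lebesgue)"
    by (intro nn_integral_mono ennreal_leI) (auto simp: v_def indicator_def)
  also have "\<dots> < \<infinity>"
    using L2 by (simp add: integrable_iff_bounded)
  finally have L2v: "(\<integral>\<^sup>+x. ennreal ((v x)\<^sup>2) \<partial>lebesgue) < \<infinity>" .
  have v_abs: "AE x in lebesgue. v x = \<bar>u x\<bar>"
    using ae by eventually_elim (auto simp: v_def indicator_def)
  have "AE x in lebesgue. AE y in lebesgue. (v x - v y)\<^sup>2 \<le> (u x - u y)\<^sup>2"
    using v_abs
  proof eventually_elim
    case (elim x)
    from v_abs show ?case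
      by eventually_elim (simp add: elim abs_le_square_iff[symmetric] abs_triangle_ineq3)
  qed
  then have le: "gagliardo s v \<le> gagliardo s u"
    by (rule gagliardo_mono_AE)
  have "enn2real (\<integral>\<^sup>+x. ennreal (v x powr p) \<partial>lebesgue) = (LINT x|lebesgue. v x powr p)"
    by (rule integral_eq_nn_integral[symmetric]) auto
  also have "\<dots> = (LINT x:U|lebesgue. \<bar>u x\<bar> powr p)"
    unfolding set_lebesgue_integral_def
    by (intro Bochner_Integration.integral_cong) (auto simp: indicator_def v_def)
  also have "\<dots> = 1"
    using norm p by (rule set_integral_powr_eq_1)
  finally have "(\<integral>\<^sup>+x. ennreal (v x powr p) \<partial>lebesgue) = 1"
    by (cases "\<integral>\<^sup>+x. ennreal (v x powr p) \<partial>lebesgue") auto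
  with L2v le \<open>gagliardo s u < \<infinity>\<close> show ?thesis
    unfolding competitor_def by (intro exI[of _ v]) (auto simp: v_def indicator_def)
qed

lemma competitor_rescale:
  fixes q :: "'a::euclidean_space"
  assumes v: "competitor s p U v" and U: "U \<subseteq> ball 0 1" and r: "0 < r" and p: "0 < p"
  shows "competitor s p (ball q r) (\<lambda>x. r powr (- real DIM('a) / p) * v ((1 / r) *\<^sub>R (x - q)))"
proof -
  have [measurable]: "v \<in> borel_measurable lebesgue" and nonneg: "\<And>x. 0 \<le> v x"
    and v0: "\<And>x. x \<notin> U \<Longrightarrow> v x = 0"
    and L2: "(\<integral>\<^sup>+x. ennreal ((v x)\<^sup>2) \<partial>lebesgue) < \<infinity>" and gag: "gagliardo s v < \<infinity>"
    and norm: "(\<integral>\<^sup>+x. ennreal (v x powr p) \<partial>lebesgue) = 1"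
    using v by (auto simp: competitor_def)
  let ?T = "\<lambda>x. (1 / r) *\<^sub>R (x - q)" and ?K = "r powr (- real DIM('a) / p)"
  have [measurable]: "?T \<in> lebesgue \<rightarrow>\<^sub>M lebesgue"
    using r by (rule measurable_rescale)
  have support: "v (?T x) = 0" if "x \<notin> ball q r" for x
  proof -
    have "r \<le> norm (x - q)"
      using that by (simp add: dist_norm norm_minus_commute)
    moreover have "norm (?T x) = norm (x - q) / r"
      using r by simp
    ultimately have "1 \<le> norm (?T x)"
      using r by (simp add: le_divide_eq)
    then have "?T x \<notin> ball 0 1"
      by (simp del: norm_scaleR)
    then show ?thesis using U v0 by blast
  qed
  have "(\<integral>\<^sup>+x. ennreal ((?K * v (?T x))\<^sup>2) \<partial>lebesgue)
      = ennreal (?K\<^sup>2) * (ennreal (r ^ DIM('a)) * (\<integral>\<^sup>+x. ennreal ((v x)\<^sup>2) \<partial>lebesgue))"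
    using nn_integral_lebesgue_rescale[OF r, of "\<lambda>y. ennreal ((v y)\<^sup>2)" q]
    by (simp add: power_mult_distrib ennreal_mult nn_integral_cmult)
  also have "\<dots> < \<infinity>"
    using L2 by (simp add: ennreal_mult_less_top)
  finally have L2': "(\<integral>\<^sup>+x. ennreal ((?K * v (?T x))\<^sup>2) \<partial>lebesgue) < \<infinity>" .
  have "(\<integral>\<^sup>+x. ennreal ((?K * v (?T x)) powr p) \<partial>lebesgue)
      = ennreal (?K powr p) * (ennreal (r ^ DIM('a)) * (\<integral>\<^sup>+x. ennreal (v x powr p) \<partial>lebesgue))"
    using nonneg
    using nn_integral_lebesgue_rescale[OF r, of "\<lambda>y. ennreal (v y powr p)" q]
    by (simp add: powr_mult ennreal_mult nn_integral_cmult)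
  also have "\<dots> = ennreal (?K powr p * r ^ DIM('a))"
    using r by (simp add: norm ennreal_mult)
  also have "?K powr p * r ^ DIM('a) = 1"
    using r p by (simp add: powr_powr powr_realpow[symmetric] powr_add[symmetric])
  finally have norm': "(\<integral>\<^sup>+x. ennreal ((?K * v (?T x)) powr p) \<partial>lebesgue) = 1"
    by simp
  have "gagliardo s (\<lambda>x. ?K * v (?T x)) < \<infinity>"
    using gag by (simp add: gagliardo_rescale[OF r] ennreal_mult_less_top)
  with L2' norm' support nonneg show ?thesis
    unfolding competitor_def by (auto intro!: mult_nonneg_nonneg)
qed

lemma ball_subset_annulus:
  fixes c :: "'a::euclidean_space"
  assumes "0 \<le> \<tau>" "\<tau> < 1"
  obtains q r where "0 < r" "ball q r \<subseteq> ball 0 1 - cball c \<tau>"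
proof -
  obtain b :: 'a where b: "b \<in> Basis"
    using nonempty_Basis by blast
  define e where "e = (if b \<bullet> c \<le> 0 then b else - b)"
  define \<rho> where "\<rho> = (1 + \<tau>) / 2"
  define r where "r = (1 - \<tau>) / 2"
  have e: "norm e = 1" "e \<bullet> c \<le> 0"
    using b by (auto simp: e_def)
  have "\<rho> \<le> norm (\<rho> *\<^sub>R e - c)"
  proof (rule power2_le_imp_le)
    have "e \<bullet> e = 1"
      using e by (simp add: norm_eq_1)
    then have "norm (\<rho> *\<^sub>R e - c) ^ 2 = \<rho>\<^sup>2 - 2 * \<rho> * (e \<bullet> c) + c \<bullet> c"
      unfolding power2_norm_eq_inner
      by (simp add: inner_diff_left inner_diff_right inner_commute[of c e] algebra_simps power2_eq_square)
    moreover have "2 * \<rho> * (e \<bullet> c) \<le> 0"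
      using assms e(2) by (simp add: \<rho>_def mult_nonneg_nonpos)
    ultimately show "\<rho>\<^sup>2 \<le> norm (\<rho> *\<^sub>R e - c) ^ 2"
      using inner_ge_zero[of c] by linarith
  qed simp
  have "ball (\<rho> *\<^sub>R e) r \<subseteq> ball 0 1 - cball c \<tau>"
  proof
    fix x assume "x \<in> ball (\<rho> *\<^sub>R e) r"
    then have x: "norm (x - \<rho> *\<^sub>R e) < r"
      by (simp add: dist_norm norm_minus_commute)
    have "norm x \<le> norm (\<rho> *\<^sub>R e) + norm (x - \<rho> *\<^sub>R e)"
      by (rule norm_triangle_sub)
    moreover have "norm (\<rho> *\<^sub>R e - c) \<le> norm (x - c) + norm (x - \<rho> *\<^sub>R e)"
      using norm_triangle_ineq4[of "x - c" "x - \<rho> *\<^sub>R e"] by simp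
    moreover have "norm (\<rho> *\<^sub>R e) = \<rho>"
      using e assms by (simp add: \<rho>_def)
    moreover have "\<rho> + r = 1" "\<rho> - r = \<tau>"
      by (simp_all add: \<rho>_def r_def field_simps)
    ultimately have "norm x < 1" "\<tau> < norm (x - c)"
      using x \<open>\<rho> \<le> norm (\<rho> *\<^sub>R e - c)\<close> by linarith+
    then show "x \<in> ball 0 1 - cball c \<tau>"
      by (simp add: dist_norm norm_minus_commute)
  qed
  moreover have "0 < r" using assms by (simp add: r_def)
  ultimately show ?thesis using that by blast
qed

lemma ex_competitor_annulus:
  fixes c d :: "'a::euclidean_space"
  assumes "competitor s p (ball 0 1 - cball d \<tau>) v" "0 < p" "0 \<le> \<tau>" "\<tau> < 1"
  shows "\<exists>w. competitor s p (ball 0 1 - cball c \<tau>) w"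
proof -
  obtain q r where "0 < r" "ball q r \<subseteq> ball 0 1 - cball c \<tau>"
    using ball_subset_annulus[OF assms(3,4)] .
  with assms(1,2) show ?thesis
    by (blast intro: competitor_mono competitor_rescale)
qed

lemma competitor_polarize:
  assumes s: "0 < s" and \<alpha>: "\<alpha> \<noteq> 0" and k: "k \<in> Basis" and ck: "c \<bullet> k = 0"
    and v: "competitor s p (ball 0 1 - cball c \<tau>) v"
  shows "competitor s p (ball 0 1 - cball (c + \<alpha> *\<^sub>R k) \<tau>) (polarize k \<alpha> v)"
proof -
  have [measurable]: "v \<in> borel_measurable lebesgue" and nonneg: "\<And>x. 0 \<le> v x"
    and v0: "\<And>x. x \<notin> ball 0 1 - cball c \<tau> \<Longrightarrow> v x = 0"
    and "(\<integral>\<^sup>+x. ennreal ((v x)\<^sup>2) \<partial>lebesgue) < \<infinity>" "gagliardo s v < \<infinity>"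
    and "(\<integral>\<^sup>+x. ennreal (v x powr p) \<partial>lebesgue) = 1"
    using v by (auto simp: competitor_def)
  moreover have "(\<integral>\<^sup>+x. ennreal ((polarize k \<alpha> v x)\<^sup>2) \<partial>lebesgue) = (\<integral>\<^sup>+x. ennreal ((v x)\<^sup>2) \<partial>lebesgue)"
    "(\<integral>\<^sup>+x. ennreal (polarize k \<alpha> v x powr p) \<partial>lebesgue) = (\<integral>\<^sup>+x. ennreal (v x powr p) \<partial>lebesgue)"
    by (rule nn_integral_polarize[OF k \<alpha>]; measurable)+
  moreover have "gagliardo s (polarize k \<alpha> v) \<le> gagliardo s v"
    by (rule gagliardo_polarize_le[OF k s \<alpha>]) measurable
  moreover have "0 \<le> polarize k \<alpha> v x" for x
    using nonneg[of x] nonneg[of "reflect k \<alpha> x"] by (simp add: polarize_def le_max_iff_disj)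
  moreover have "polarize k \<alpha> v x = 0" if "x \<notin> ball 0 1 - cball (c + \<alpha> *\<^sub>R k) \<tau>" for x
    using polarize_eq_0_outside_annulus[OF k ck nonneg v0 that] .
  ultimately show ?thesis
    unfolding competitor_def using polarize_measurable[OF k] by (auto intro: le_less_trans)
qed

section \<open>Moving the hole\<close>

lemma b_const_nonneg: "0 < s \<Longrightarrow> s < 1 \<Longrightarrow> 0 \<le> b_const N s"
  unfolding b_const_def
  by (intro divide_nonneg_pos mult_nonneg_nonneg Gamma_real_pos less_imp_le[OF Gamma_real_pos]) auto

lemma Hs_seminorm_sq_nonneg: "0 < s \<Longrightarrow> s < 1 \<Longrightarrow> 0 \<le> Hs_seminorm_sq s u"
  unfolding Hs_seminorm_sq_def by (simp add: b_const_nonneg)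

lemma Hs_seminorm_sq_mono:
  fixes u w :: "'a::euclidean_space \<Rightarrow> real"
  assumes "0 < s" "s < 1" "gagliardo s w \<le> gagliardo s u" "gagliardo s u < \<infinity>"
  shows "Hs_seminorm_sq s w \<le> Hs_seminorm_sq s u"
  unfolding Hs_seminorm_sq_def using assms b_const_nonneg[OF assms(1,2)]
  by (intro mult_left_mono enn2real_mono) auto

text \<open>Hypothesis \<open>nonempty\<close> excludes that only V admits test functions, in which case
  \<open>lambda_sp s p U\<close> would be the junk value \<open>Inf {}\<close>.\<close>

lemma lambda_sp_le_by_competitors:
  fixes U V :: "'a::euclidean_space set"
  assumes s: "0 < s" "s < 1" and p: "0 < p" and U: "U \<in> sets lebesgue" and V: "V \<in> sets lebesgue"
    and improve: "\<And>v. competitor s p U v \<Longrightarrow> \<exists>w. competitor s p V w \<and> gagliardo s w \<le> gagliardo s v"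
    and nonempty: "\<And>w. competitor s p V w \<Longrightarrow> \<exists>v. competitor s p U v"
  shows "lambda_sp s p V \<le> lambda_sp s p U"
proof -
  define E where "E W = {Hs_seminorm_sq s u | u. u \<in> Hs0 s W \<and> Lp_norm_on p W u = 1}" for W :: "'a set"
  have E_empty: "E W = {} \<longleftrightarrow> (\<nexists>v. competitor s p W v)" if "W \<in> sets lebesgue" for W
    using ex_competitor_le[OF _ _ p that] competitor_in_Hs0[OF _ p] by (fastforce simp: E_def)
  have lambda_E: "lambda_sp s p W = Inf (E W)" for W
    by (simp add: lambda_sp_def E_def)
  show ?thesis
  proof (cases "E U = {}")
    case True
    then have "E V = {}"
      using E_empty[OF U] E_empty[OF V] nonempty by blast
    with True show ?thesis
      by (simp add: lambda_E)
  next
    case False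
    have "Inf (E V) \<le> Inf (E U)"
    proof (rule cInf_mono[OF False])
      show "bdd_below (E V)"
        by (rule bdd_belowI[of _ 0]) (auto simp: E_def Hs_seminorm_sq_nonneg[OF s])
    next
      fix z assume "z \<in> E U"
      then obtain u where u: "u \<in> Hs0 s U" "Lp_norm_on p U u = 1" and z: "z = Hs_seminorm_sq s u"
        by (auto simp: E_def)
      obtain v where v: "competitor s p U v" "gagliardo s v \<le> gagliardo s u"
        using ex_competitor_le[OF u p U] by blast
      obtain w where w: "competitor s p V w" "gagliardo s w \<le> gagliardo s v"
        using improve[OF v(1)] by blast
      have "gagliardo s u < \<infinity>"
        using u(1) by (simp add: Hs0_def Hs_def)
      then have "Hs_seminorm_sq s w \<le> z"
        unfolding z using v(2) w(2) by (intro Hs_seminorm_sq_mono[OF s]) auto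
      moreover have "Hs_seminorm_sq s w \<in> E V"
        using competitor_in_Hs0[OF w(1) p] by (auto simp: E_def)
      ultimately show "\<exists>y\<in>E V. y \<le> z" by blast
    qed
    then show ?thesis
      by (simp add: lambda_E)
  qed
qed

lemma annulus_sets: "ball 0 1 - cball (c :: 'a::euclidean_space) \<tau> \<in> sets lebesgue"
  by (intro sets.Diff) (auto simp: fmeasurable_def)

lemma lambda_sp_shift_hole_le:
  fixes c :: "'a::euclidean_space"
  assumes s: "0 < s" "s < 1" and p: "0 < p" and \<tau>: "0 \<le> \<tau>" "\<tau> < 1"
    and k: "k \<in> Basis" and ck: "c \<bullet> k = 0"
  shows "lambda_sp s p (ball 0 1 - cball (c + \<alpha> *\<^sub>R k) \<tau>) \<le> lambda_sp s p (ball 0 1 - cball c \<tau>)"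
proof (cases "\<alpha> = 0")
  case False
  show ?thesis
  proof (rule lambda_sp_le_by_competitors[OF s p annulus_sets annulus_sets])
    fix v assume "competitor s p (ball 0 1 - cball c \<tau>) v"
    then show "\<exists>w. competitor s p (ball 0 1 - cball (c + \<alpha> *\<^sub>R k) \<tau>) w \<and> gagliardo s w \<le> gagliardo s v"
      using competitor_polarize[OF s(1) False k ck] gagliardo_polarize_le[OF k s(1) False]
      unfolding competitor_def by blast
  qed (use ex_competitor_annulus p \<tau> in blast)
qed simp

lemma lambda_sp_annulus_le_centered:
  fixes a :: "'a::euclidean_space"
  assumes s: "0 < s" "s < 1" and p: "0 < p" and \<tau>: "0 \<le> \<tau>" "\<tau> < 1"
  shows "lambda_sp s p (ball 0 1 - cball a \<tau>) \<le> lambda_sp s p (ball 0 1 - cball (0::'a) \<tau>)"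
proof -
  have "lambda_sp s p (ball 0 1 - cball (\<Sum>b\<in>F. (a \<bullet> b) *\<^sub>R b) \<tau>) \<le> lambda_sp s p (ball 0 1 - cball (0::'a) \<tau>)"
    if "F \<subseteq> Basis" for F
    using finite_subset[OF that finite_Basis] that
  proof (induction F rule: finite_induct)
    case (insert k F)
    define c where "c = (\<Sum>b\<in>F. (a \<bullet> b) *\<^sub>R b)"
    have k: "k \<in> Basis" and F: "F \<subseteq> Basis"
      using insert.prems by auto
    have "b \<bullet> k = 0" if "b \<in> F" for b
      using that F k insert.hyps(2) by (auto intro: inner_not_same_Basis)
    then have "c \<bullet> k = 0"
      unfolding c_def inner_sum_left by simp
    then have "lambda_sp s p (ball 0 1 - cball (c + (a \<bullet> k) *\<^sub>R k) \<tau>) \<le> lambda_sp s p (ball 0 1 - cball c \<tau>)"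
      by (rule lambda_sp_shift_hole_le[OF s p \<tau> k])
    also have "\<dots> \<le> lambda_sp s p (ball 0 1 - cball (0::'a) \<tau>)"
      using insert.IH[OF F] unfolding c_def .
    finally show ?case
      using insert.hyps by (simp add: c_def add.commute)
  qed simp
  from this[of Basis] show ?thesis
    by (simp add: euclidean_representation)
qed

theorem theorem1p4:
  fixes s p \<tau> :: real
  assumes "0 < s" "s < 1"
    and "p \<in> {1, 2}" "admissible DIM('a::euclidean_space) s p"
    and "0 < \<tau>" "\<tau> < 1"
  defines "A \<equiv> {a :: 'a. a \<in> ball 0 1 \<and> ball a \<tau> \<subseteq> ball 0 1}"
  shows "0 \<in> A \<and>
    (\<forall>a\<in>A. lambda_sp s p (ball 0 1 - closure (ball a \<tau>))
             \<le> lambda_sp s p (ball 0 1 - closure (ball (0::'a) \<tau>)))"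
proof
  show "0 \<in> A"
    using assms(6) by (auto simp: A_def)
  have "0 < p"
    using assms(3) by auto
  then have "lambda_sp s p (ball 0 1 - cball a \<tau>) \<le> lambda_sp s p (ball 0 1 - cball (0::'a) \<tau>)" for a :: 'a
    using assms(5,6) by (intro lambda_sp_annulus_le_centered[OF assms(1,2)]) auto
  then show "\<forall>a\<in>A. lambda_sp s p (ball 0 1 - closure (ball a \<tau>))
      \<le> lambda_sp s p (ball 0 1 - closure (ball (0::'a) \<tau>))"
    using assms(5) by simp
qed

end
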